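(* Let $\mathcal{I}$ be a countable nonempty set of database instances, $\mathcal{L}$ a query language, $f$ a set function on subsets of $\mathcal{I}$ with nonnegative real values, and let $p$ be the answer-dependent pricing function $p(\mathbf{Q},E)=f(\overline{\mathcal{S}}_{\mathbf{Q}}(E))$ for $\mathbf{Q}\in B(\mathcal{L})$, $E\in\{\mathbf{Q}(D):D\in\mathcal{I}\}$. The following are equivalent: (1) $p$ has no bundle arbitrage; (2) $f$ is subadditive over every semilattice $\mathcal{S}^{\mathcal{L}}_D$, $D\in\mathcal{I}$.
   Context: A query is a deterministic function on $\mathcal{I}$. A query bundle $\mathbf{Q}=(Q_1,\dots,Q_n)$ is a finite tuple of queries from $\mathcal{L}$, with $\mathbf{Q}(D)=(Q_1(D),\dots,Q_n(D))$; $B(\mathcal{L})$ is the set of all finite query bundles, closed under union (concatenation) $\mathbf{Q}_1,\mathbf{Q}_2$. $p$ has no bundle arbitrage if for every $D\in\mathcal{I}$ and all $\mathbf{Q}_1,\mathbf{Q}_2\in B(\mathcal{L})$, with $\mathbf{Q}=\mathbf{Q}_1,\mathbf{Q}_2$, we have $p(\mathbf{Q},\mathbf{Q}(D))\le p(\mathbf{Q}_1,\mathbf{Q}_1(D))+p(\mathbf{Q}_2,\mathbf{Q}_2(D))$. The conflict set is $\overline{\mathcal{S}}_{\mathbf{Q}}(E)=\{D'\in\mathcal{I}:\mathbf{Q}(D')\neq E\}$. For $D\in\mathcal{I}$, $\mathcal{S}^{\mathcal{L}}_D=\{\overline{\mathcal{S}}_{\mathbf{Q}}(\mathbf{Q}(D)):\mathbf{Q}\in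 B(\mathcal{L})\}$, a join-semilattice under inclusion with join $\cup$. $f$ is subadditive over $\mathcal{S}^{\mathcal{L}}_D$ if $f(A\cup B)\le f(A)+f(B)$ for all $A,B\in\mathcal{S}^{\mathcal{L}}_D$. *)

theory Defs
  imports Complex_Main "HOL-Library.Countable_Set"
begin

text \<open>Database instances have type 'd; a query is a (deterministic) function
 'd => 'a; a query language L is a set of queries. A query bundle is a finite
 tuple (list) of queries from L; B(L) = lists L, union of bundles = list append.\<close>

definition bundles :: "('d \<Rightarrow> 'a) set \<Rightarrow> ('d \<Rightarrow> 'a) list set" where
  "bundles L = lists L"

definition bundle_eval :: "('d \<Rightarrow> 'a) list \<Rightarrow> 'd \<Rightarrow> 'a list" where
  "bundle_eval Q D = map (\<lambda>q. q D) Q"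

definition conflict_set :: "'d set \<Rightarrow> ('d \<Rightarrow> 'a) list \<Rightarrow> 'a list \<Rightarrow> 'd set" where
  "conflict_set I Q E = {D' \<in> I. bundle_eval Q D' \<noteq> E}"

definition answer_price :: "'d set \<Rightarrow> ('d set \<Rightarrow> real) \<Rightarrow> ('d \<Rightarrow> 'a) list \<Rightarrow> 'a list \<Rightarrow> real" where
  "answer_price I f Q E = f (conflict_set I Q E)"

definition no_bundle_arbitrage ::
  "'d set \<Rightarrow> ('d \<Rightarrow> 'a) set \<Rightarrow> (('d \<Rightarrow> 'a) list \<Rightarrow> 'a list \<Rightarrow> real) \<Rightarrow> bool" where
  "no_bundle_arbitrage I L p \<longleftrightarrow>
     (\<forall>D\<in>I. \<forall>Q1\<in>bundles L. \<forall>Q2\<in>bundles L.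
        p (Q1 @ Q2) (bundle_eval (Q1 @ Q2) D)
          \<le> p Q1 (bundle_eval Q1 D) + p Q2 (bundle_eval Q2 D))"

definition conflict_semilattice :: "'d set \<Rightarrow> ('d \<Rightarrow> 'a) set \<Rightarrow> 'd \<Rightarrow> 'd set set" where
  "conflict_semilattice I L D = {conflict_set I Q (bundle_eval Q D) | Q. Q \<in> bundles L}"

definition subadditive_over :: "('d set \<Rightarrow> real) \<Rightarrow> 'd set set \<Rightarrow> bool" where
  "subadditive_over f S \<longleftrightarrow> (\<forall>A\<in>S. \<forall>B\<in>S. f (A \<union> B) \<le> f A + f B)"

end

theory Submission
  imports Defs
begin

text \<open>The conflict set of a concatenated bundle is the union of the conflict sets of its
  parts, so the arbitrage inequality for two bundles at D is literally the subadditivity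
  inequality for two elements of the semilattice at D.\<close>

lemma conflict_set_append:
  "conflict_set I (Q1 @ Q2) (bundle_eval (Q1 @ Q2) D) =
   conflict_set I Q1 (bundle_eval Q1 D) \<union> conflict_set I Q2 (bundle_eval Q2 D)"
  by (auto simp: conflict_set_def bundle_eval_def)

lemma subadditive_over_conflict_semilattice_iff:
  "subadditive_over f (conflict_semilattice I L D) \<longleftrightarrow>
   (\<forall>Q1\<in>bundles L. \<forall>Q2\<in>bundles L.
      f (conflict_set I (Q1 @ Q2) (bundle_eval (Q1 @ Q2) D))
        \<le> f (conflict_set I Q1 (bundle_eval Q1 D)) + f (conflict_set I Q2 (bundle_eval Q2 D)))"
  unfolding subadditive_over_def conflict_set_append conflict_semilattice_def by blast

lemma no_bundle_arbitrage_answer_price_iff: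
  "no_bundle_arbitrage I L (answer_price I f) \<longleftrightarrow>
   (\<forall>D\<in>I. subadditive_over f (conflict_semilattice I L D))"
  by (simp add: no_bundle_arbitrage_def answer_price_def
      subadditive_over_conflict_semilattice_iff)

theorem theorem2:
  fixes I :: "'d set" and L :: "('d \<Rightarrow> 'a) set" and f :: "'d set \<Rightarrow> real"
  assumes "countable I" and "I \<noteq> {}"
    and "\<And>S. S \<subseteq> I \<Longrightarrow> f S \<ge> 0"
  shows "no_bundle_arbitrage I L (answer_price I f) \<longleftrightarrow>
         (\<forall>D\<in>I. subadditive_over f (conflict_semilattice I L D))"
  by (rule no_bundle_arbitrage_answer_price_iff)

end
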